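(* Let $(\widetilde M,\widetilde{\mathcal C})$ be a causal manifold with partial order $\preceq$, let $T\in G(\widetilde M,\widetilde{\mathcal C})$ generate an infinite cyclic group $\Gamma$ acting properly discontinuously on $\widetilde M$, let $p:\widetilde M\to M=\Gamma\backslash\widetilde M$ be a causal covering, and assume (after replacing $T$ by $T^{-1}$ if necessary) that $T$ is dominant. Let $\check G$ be the centralizer of $T$ in $G(\widetilde M,\widetilde{\mathcal C})$ and $G=\check G/\Gamma$, acting on $M$. If $G$ acts almost $2$-transitively on $M$, then $p$ is quasi-total, i.e. there is $N\in\mathbb{N}$ such that for all $a,b\in\widetilde M$ some $k\in\{0,\dots,N\}$ satisfies $a\preceq T^kb$ or $b\preceq T^ka$ (so $(\widetilde M,\preceq,T)$ is a quasi-total triple).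
   Context: A cone field $\mathcal C$ on a manifold is a smoothly varying choice of closed pointed regular convex cones $\mathcal C_x\subset T_xM$. A piecewise smooth curve is causal if its derivative lies in the cone field at all but finitely many times; $x\preceq_s y$ iff a causal curve joins $x$ to $y$, and $\preceq$ is the closure of $\preceq_s$ in $M\times M$. The conal manifold is causal if $\preceq$ is a partial order and totally acausal if $\preceq=M\times M$. $G(M,\mathcal C)$ is the group of diffeomorphisms preserving the cone field ($d\phi(\mathcal C_m)=\mathcal C_{\phi(m)}$). $M$ carries the cone field descended from $\widetilde M$, and $p$ is a causal covering if $M$ is totally acausal. $T$ is dominant if for all $a,b\in\widetilde M$ there is $n\in\mathbb{N}$ with $T^na\succ b$. An action of a group $G$ on a set $X$ is almost $2$-transitive if there is a $G$-orbit $X^{(2)}\subset X\times X$ such that for all $x,y\in X$ there exists $z\in X$ with $(x,z)\in X^{(2)}$ and $(z,y)\in X^{(2)}$. *)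

theory Defs
  imports "HOL-Analysis.Analysis"
begin

text \<open>C-infinity in the sense: Frechet differentiable at every point of S, and
  every directional derivative is again C-infinity (greatest fixed point).\<close>
coinductive smooth_on :: "'a::real_normed_vector set \<Rightarrow> ('a \<Rightarrow> 'b::real_normed_vector) \<Rightarrow> bool"
  for S :: "'a set" where
  "\<lbrakk> \<forall>x\<in>S. f differentiable (at x);
     \<forall>v. smooth_on S (\<lambda>x. frechet_derivative f (at x) v) \<rbrakk> \<Longrightarrow> smooth_on S f"

type_synonym ('p, 'e) chart = "'p set \<times> ('p \<Rightarrow> 'e)"

definition is_chart :: "'p topology \<Rightarrow> ('p, 'e::euclidean_space) chart \<Rightarrow> bool" where
  "is_chart X c \<longleftrightarrow> (case c of (U, \<phi>) \<Rightarrow>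
      openin X U \<and> inj_on \<phi> U \<and> open (\<phi> ` U) \<and>
      continuous_map (subtopology X U) euclidean \<phi> \<and>
      continuous_map (subtopology euclidean (\<phi> ` U)) X (inv_into U \<phi>))"

definition smooth_atlas :: "'p topology \<Rightarrow> ('p, 'e::euclidean_space) chart set \<Rightarrow> bool" where
  "smooth_atlas X A \<longleftrightarrow>
     (\<forall>c\<in>A. is_chart X c) \<and> \<Union> (fst ` A) = topspace X \<and>
     (\<forall>(U, \<phi>)\<in>A. \<forall>(V, \<psi>)\<in>A. smooth_on (\<phi> ` (U \<inter> V)) (\<psi> \<circ> inv_into U \<phi>))"

definition smooth_manifold :: "'p topology \<Rightarrow> ('p, 'e::euclidean_space) chart set \<Rightarrow> bool" where
  "smooth_manifold X A \<longleftrightarrow> Hausdorff_space X \<and> second_countable X \<and> smooth_atlas X A"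

definition smooth_map :: "'p topology \<Rightarrow> ('p, 'e::euclidean_space) chart set \<Rightarrow> ('p \<Rightarrow> 'p) \<Rightarrow> bool" where
  "smooth_map X A f \<longleftrightarrow> continuous_map X X f \<and>
     (\<forall>(U, \<phi>)\<in>A. \<forall>(V, \<psi>)\<in>A. smooth_on (\<phi> ` (U \<inter> f -` V)) (\<psi> \<circ> f \<circ> inv_into U \<phi>))"

definition diffeo :: "'p topology \<Rightarrow> ('p, 'e::euclidean_space) chart set \<Rightarrow> ('p \<Rightarrow> 'p) \<Rightarrow> bool" where
  "diffeo X A f \<longleftrightarrow> bij_betw f (topspace X) (topspace X) \<and> smooth_map X A f \<and>
     smooth_map X A (inv_into (topspace X) f)"

text \<open>A cone field assigns to each point x and each chart (U,phi) containing x
  the cone C_x expressed in the coordinates of that chart (a subset of the model space).\<close>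
type_synonym ('p, 'e) cone_field = "'p \<Rightarrow> ('p, 'e) chart \<Rightarrow> 'e set"

definition pointed_regular_closed_convex_cone :: "'e::euclidean_space set \<Rightarrow> bool" where
  "pointed_regular_closed_convex_cone C \<longleftrightarrow>
     closed C \<and> convex C \<and> cone C \<and> C \<noteq> {} \<and> C \<inter> uminus ` C = {0} \<and> interior C \<noteq> {}"

definition cone_field :: "'p topology \<Rightarrow> ('p, 'e::euclidean_space) chart set \<Rightarrow> ('p, 'e) cone_field \<Rightarrow> bool" where
  "cone_field X A Cf \<longleftrightarrow>
     \<comment> \<open>each C_x is a closed pointed regular convex cone\<close>
     (\<forall>(U, \<phi>)\<in>A. \<forall>x\<in>U. pointed_regular_closed_convex_cone (Cf x (U, \<phi>))) \<and>
     \<comment> \<open>coordinate expressions are related by the differential of the chart change\<close>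
     (\<forall>(U, \<phi>)\<in>A. \<forall>(V, \<psi>)\<in>A. \<forall>x\<in>U \<inter> V.
        Cf x (V, \<psi>) = frechet_derivative (\<psi> \<circ> inv_into U \<phi>) (at (\<phi> x)) ` Cf x (U, \<phi>)) \<and>
     \<comment> \<open>smooth variation: locally C_y = g(y) C_0 for a smooth field g of linear isomorphisms\<close>
     (\<forall>x\<in>topspace X. \<exists>U \<phi> W C0 g. (U, \<phi>) \<in> A \<and> openin X W \<and> x \<in> W \<and> W \<subseteq> U \<and>
        smooth_on (\<phi> ` W) (g :: 'e \<Rightarrow> ('e \<Rightarrow>\<^sub>L 'e)) \<and>
        (\<forall>y\<in>W. bij (blinfun_apply (g (\<phi> y))) \<and> Cf y (U, \<phi>) = blinfun_apply (g (\<phi> y)) ` C0))"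

definition conal_manifold :: "'p topology \<Rightarrow> ('p, 'e::euclidean_space) chart set \<Rightarrow> ('p, 'e) cone_field \<Rightarrow> bool" where
  "conal_manifold X A Cf \<longleftrightarrow> smooth_manifold X A \<and> cone_field X A Cf"

definition smooth_piece :: "'p topology \<Rightarrow> ('p, 'e::euclidean_space) chart set \<Rightarrow> (real \<Rightarrow> 'p) \<Rightarrow> real \<Rightarrow> real \<Rightarrow> bool" where
  "smooth_piece X A \<gamma> s t \<longleftrightarrow>
     (\<forall>\<tau>\<in>{s..t}. \<forall>(U, \<phi>)\<in>A. \<gamma> \<tau> \<in> U \<longrightarrow>
        (\<exists>e>0. \<exists>h. smooth_on (ball \<tau> e) (h :: real \<Rightarrow> 'e) \<and>
           (\<forall>r\<in>ball \<tau> e \<inter> {s..t}. \<gamma> r \<in> U \<and> \<phi> (\<gamma> r) = h r)))"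

definition piecewise_smooth_curve :: "'p topology \<Rightarrow> ('p, 'e::euclidean_space) chart set \<Rightarrow> (real \<Rightarrow> 'p) \<Rightarrow> real \<Rightarrow> real \<Rightarrow> bool" where
  "piecewise_smooth_curve X A \<gamma> a b \<longleftrightarrow> a \<le> b \<and>
     continuous_map (subtopology euclidean {a..b}) X \<gamma> \<and>
     (\<exists>P. finite P \<and> a \<in> P \<and> b \<in> P \<and> P \<subseteq> {a..b} \<and>
        (\<forall>s\<in>P. \<forall>t\<in>P. s < t \<and> {s<..<t} \<inter> P = {} \<longrightarrow> smooth_piece X A \<gamma> s t))"

definition causal_curve :: "'p topology \<Rightarrow> ('p, 'e::euclidean_space) chart set \<Rightarrow> ('p, 'e) cone_field \<Rightarrow> (real \<Rightarrow> 'p) \<Rightarrow> real \<Rightarrow> real \<Rightarrow> bool" where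
  "causal_curve X A Cf \<gamma> a b \<longleftrightarrow> piecewise_smooth_curve X A \<gamma> a b \<and>
     (\<exists>F. finite F \<and> (\<forall>t\<in>{a..b} - F. \<forall>(U, \<phi>)\<in>A. \<gamma> t \<in> U \<longrightarrow>
        (\<exists>v. ((\<phi> \<circ> \<gamma>) has_vector_derivative v) (at t within {a..b}) \<and> v \<in> Cf (\<gamma> t) (U, \<phi>))))"

definition causal_s :: "'p topology \<Rightarrow> ('p, 'e::euclidean_space) chart set \<Rightarrow> ('p, 'e) cone_field \<Rightarrow> ('p \<times> 'p) set" where
  "causal_s X A Cf = {(x, y). \<exists>\<gamma> a b. causal_curve X A Cf \<gamma> a b \<and> \<gamma> a = x \<and> \<gamma> b = y}"

definition causal_rel :: "'p topology \<Rightarrow> ('p, 'e::euclidean_space) chart set \<Rightarrow> ('p, 'e) cone_field \<Rightarrow> ('p \<times> 'p) set" where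
  "causal_rel X A Cf = (prod_topology X X) closure_of (causal_s X A Cf)"

definition causal_manifold :: "'p topology \<Rightarrow> ('p, 'e::euclidean_space) chart set \<Rightarrow> ('p, 'e) cone_field \<Rightarrow> bool" where
  "causal_manifold X A Cf \<longleftrightarrow> conal_manifold X A Cf \<and> partial_order_on (topspace X) (causal_rel X A Cf)"

definition totally_acausal :: "'p topology \<Rightarrow> ('p, 'e::euclidean_space) chart set \<Rightarrow> ('p, 'e) cone_field \<Rightarrow> bool" where
  "totally_acausal X A Cf \<longleftrightarrow> causal_rel X A Cf = topspace X \<times> topspace X"

definition cone_group :: "'p topology \<Rightarrow> ('p, 'e::euclidean_space) chart set \<Rightarrow> ('p, 'e) cone_field \<Rightarrow> ('p \<Rightarrow> 'p) set" where
  "cone_group X A Cf = {f. diffeo X A f \<and>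
     (\<forall>(U, \<phi>)\<in>A. \<forall>(V, \<psi>)\<in>A. \<forall>x\<in>U. f x \<in> V \<longrightarrow>
        frechet_derivative (\<psi> \<circ> f \<circ> inv_into U \<phi>) (at (\<phi> x)) ` Cf x (U, \<phi>) = Cf (f x) (V, \<psi>))}"

definition Tpow :: "'p topology \<Rightarrow> ('p \<Rightarrow> 'p) \<Rightarrow> int \<Rightarrow> 'p \<Rightarrow> 'p" where
  "Tpow X T k = (if 0 \<le> k then T ^^ nat k else (inv_into (topspace X) T) ^^ nat (- k))"

definition properly_discontinuous_Z :: "'p topology \<Rightarrow> ('p \<Rightarrow> 'p) \<Rightarrow> bool" where
  "properly_discontinuous_Z X T \<longleftrightarrow>
     (\<forall>x\<in>topspace X. \<exists>U. openin X U \<and> x \<in> U \<and>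
        (\<forall>k::int. k \<noteq> 0 \<longrightarrow> Tpow X T k ` U \<inter> U = {}))"

definition infinite_cyclic_gen :: "'p topology \<Rightarrow> ('p \<Rightarrow> 'p) \<Rightarrow> bool" where
  "infinite_cyclic_gen X T \<longleftrightarrow>
     (\<forall>k::int. k \<noteq> 0 \<longrightarrow> (\<exists>x\<in>topspace X. Tpow X T k x \<noteq> x))"

text \<open>The projection p: a point goes to its Gamma-orbit; M = Gamma\textbackslash M~ is the set of orbits.\<close>
definition orb :: "'p topology \<Rightarrow> ('p \<Rightarrow> 'p) \<Rightarrow> 'p \<Rightarrow> 'p set" where
  "orb X T a = range (\<lambda>k. Tpow X T k a)"

definition quot_space :: "'p topology \<Rightarrow> ('p \<Rightarrow> 'p) \<Rightarrow> 'p set set" where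
  "quot_space X T = orb X T ` topspace X"

definition quot_top :: "'p topology \<Rightarrow> ('p \<Rightarrow> 'p) \<Rightarrow> 'p set topology" where
  "quot_top X T = topology (\<lambda>Q. Q \<subseteq> quot_space X T \<and> openin X (\<Union> Q))"

definition quot_atlas :: "'p topology \<Rightarrow> ('p, 'e::euclidean_space) chart set \<Rightarrow> ('p \<Rightarrow> 'p) \<Rightarrow> ('p set, 'e) chart set" where
  "quot_atlas X A T = {(orb X T ` W, \<lambda>Q. \<phi> (the_elem (Q \<inter> W))) | U \<phi> W.
      (U, \<phi>) \<in> A \<and> openin X W \<and> W \<subseteq> U \<and> inj_on (orb X T) W}"

definition quot_cone_field :: "'p topology \<Rightarrow> ('p, 'e::euclidean_space) chart set \<Rightarrow> ('p, 'e) cone_field \<Rightarrow> ('p \<Rightarrow> 'p) \<Rightarrow> ('p set, 'e) cone_field" where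
  "quot_cone_field X A Cf T Q c = (SOME C. \<exists>U \<phi> W a.
      (U, \<phi>) \<in> A \<and> openin X W \<and> W \<subseteq> U \<and> inj_on (orb X T) W \<and>
      c = (orb X T ` W, \<lambda>Q'. \<phi> (the_elem (Q' \<inter> W))) \<and> a \<in> W \<and> a \<in> Q \<and> C = Cf a (U, \<phi>))"

definition causal_covering :: "'p topology \<Rightarrow> ('p, 'e::euclidean_space) chart set \<Rightarrow> ('p, 'e) cone_field \<Rightarrow> ('p \<Rightarrow> 'p) \<Rightarrow> bool" where
  "causal_covering X A Cf T \<longleftrightarrow>
     totally_acausal (quot_top X T) (quot_atlas X A T) (quot_cone_field X A Cf T)"

definition dominant :: "'p topology \<Rightarrow> ('p, 'e::euclidean_space) chart set \<Rightarrow> ('p, 'e) cone_field \<Rightarrow> ('p \<Rightarrow> 'p) \<Rightarrow> bool" where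
  "dominant X A Cf T \<longleftrightarrow> (\<forall>a\<in>topspace X. \<forall>b\<in>topspace X. \<exists>n::nat.
      (b, (T ^^ n) a) \<in> causal_rel X A Cf \<and> (T ^^ n) a \<noteq> b)"

definition centralizer :: "'p topology \<Rightarrow> ('p, 'e::euclidean_space) chart set \<Rightarrow> ('p, 'e) cone_field \<Rightarrow> ('p \<Rightarrow> 'p) \<Rightarrow> ('p \<Rightarrow> 'p) set" where
  "centralizer X A Cf T = {g \<in> cone_group X A Cf. \<forall>x\<in>topspace X. g (T x) = T (g x)}"

text \<open>G = centralizer / Gamma acts on M by g.p(x) = p(g x). An orbit of G on M \<times> M is the
  orbit of some pair (p a0, p c0).\<close>
definition almost_2_transitive_quot :: "'p topology \<Rightarrow> ('p, 'e::euclidean_space) chart set \<Rightarrow> ('p, 'e) cone_field \<Rightarrow> ('p \<Rightarrow> 'p) \<Rightarrow> bool" where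
  "almost_2_transitive_quot X A Cf T \<longleftrightarrow>
     (\<exists>a0\<in>topspace X. \<exists>c0\<in>topspace X.
        let X2 = {(orb X T (g a0), orb X T (g c0)) | g. g \<in> centralizer X A Cf T} in
        \<forall>x\<in>quot_space X T. \<forall>y\<in>quot_space X T. \<exists>z\<in>quot_space X T. (x, z) \<in> X2 \<and> (z, y) \<in> X2)"

definition quasi_total :: "'p topology \<Rightarrow> ('p, 'e::euclidean_space) chart set \<Rightarrow> ('p, 'e) cone_field \<Rightarrow> ('p \<Rightarrow> 'p) \<Rightarrow> bool" where
  "quasi_total X A Cf T \<longleftrightarrow> (\<exists>N::nat. \<forall>a\<in>topspace X. \<forall>b\<in>topspace X. \<exists>k\<le>N.
      (a, (T ^^ k) b) \<in> causal_rel X A Cf \<or> (b, (T ^^ k) a) \<in> causal_rel X A Cf)"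

end

theory Submission
  imports Defs
begin

text \<open>Every element of the cone group preserves the causal order: it maps causal curves to causal
  curves (chain rule in charts), hence \<open>\<preceq>\<^sub>s\<close> into itself, and by continuity its closure \<open>\<preceq>\<close>.
  As \<open>T\<close> and \<open>T\<^sup>-\<^sup>1\<close> both lie in the cone group, all \<open>T\<^sup>k\<close>, \<open>k \<in> \<int>\<close>, are order automorphisms.

  Let the orbit in almost 2-transitivity be that of the pair of \<open>\<Gamma>\<close>-orbits of \<open>a\<^sub>0\<close> and \<open>c\<^sub>0\<close>.
  Dominance gives \<open>c\<^sub>0 \<preceq> T\<^sup>p a\<^sub>0\<close>, \<open>a\<^sub>0 \<preceq> T\<^sup>q c\<^sub>0\<close> and \<open>a\<^sub>0 \<preceq> T\<^sup>n a\<^sub>0\<close> with \<open>n > 0\<close>, and the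
  centralizer transports these to every translate \<open>(g a\<^sub>0, g c\<^sub>0)\<close>. Joining the orbits of \<open>a\<close> and
  \<open>b\<close> by two translates and chaining the inequalities both ways gives \<open>a \<preceq> T\<^sup>s b\<close> and
  \<open>b \<preceq> T\<^sup>t a\<close> with \<open>s + t = 2(p + q)\<close>, so one exponent is at most \<open>p + q\<close>. Since every point
  lies in the orbit of some \<open>g a\<^sub>0\<close>, also \<open>x \<preceq> T\<^sup>n x\<close> for all \<open>x\<close>, which raises a negative
  exponent into \<open>[0, n)\<close>. Hence \<open>N = p + q + n\<close> works.\<close>

lemma smooth_on_differentiable: "smooth_on S f \<Longrightarrow> x \<in> S \<Longrightarrow> f differentiable (at x)"
  by (erule smooth_on.cases) auto

lemma smooth_on_frechet_derivative:
  "smooth_on S f \<Longrightarrow> smooth_on S (\<lambda>x. frechet_derivative f (at x) v)"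
  by (erule smooth_on.cases) auto

lemma smooth_on_has_derivative:
  "smooth_on S f \<Longrightarrow> x \<in> S \<Longrightarrow> (f has_derivative frechet_derivative f (at x)) (at x)"
  using smooth_on_differentiable frechet_derivative_works by blast

lemma smooth_on_subset:
  assumes "smooth_on S f" "T \<subseteq> S"
  shows "smooth_on T f"
proof -
  have "\<exists>S. smooth_on S f \<and> T \<subseteq> S" using assms by blast
  then show ?thesis
  proof (coinduction arbitrary: f rule: smooth_on.coinduct)
    case (smooth_on f)
    then show ?case using smooth_on_differentiable smooth_on_frechet_derivative by blast
  qed
qed

text \<open>The coinduction runs over functions agreeing on \<open>S\<close> with a member of \<open>P\<close>; openness of \<open>S\<close>
  makes their derivatives coincide there.\<close>
lemma smooth_on_coinduct_open:
  assumes "open S" "P f"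
    and step: "\<And>f. P f \<Longrightarrow> \<exists>D. (\<forall>x\<in>S. (f has_derivative D x) (at x)) \<and> (\<forall>v. P (\<lambda>x. D x v))"
  shows "smooth_on S f"
proof -
  have "\<exists>g. P g \<and> (\<forall>x\<in>S. f x = g x)" using \<open>P f\<close> by blast
  then show ?thesis
  proof (coinduction arbitrary: f rule: smooth_on.coinduct)
    case (smooth_on f)
    then obtain g D where g: "\<forall>x\<in>S. f x = g x"
      and D: "\<forall>x\<in>S. (g has_derivative D x) (at x)" "\<forall>v. P (\<lambda>x. D x v)"
      using step by metis
    have f_D: "(f has_derivative D x) (at x)" if "x \<in> S" for x
      by (rule has_derivative_transform_within_open[OF D(1)[rule_format, OF that] \<open>open S\<close> that])
        (use g in auto)
    have "\<forall>x\<in>S. frechet_derivative f (at x) v = D x v" for v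
      using f_D frechet_derivative_at by metis
    then show ?case using f_D D(2) differentiableI by blast
  qed
qed

lemma smooth_on_bounded_linear:
  assumes "smooth_on S u" "open S" "bounded_linear L"
  shows "smooth_on S (\<lambda>x. L (u x))"
proof (rule smooth_on_coinduct_open[where P = "\<lambda>f. \<exists>u. smooth_on S u \<and> f = (\<lambda>x. L (u x))"])
  fix f assume "\<exists>u. smooth_on S u \<and> f = (\<lambda>x. L (u x))"
  then obtain u where u: "smooth_on S u" "f = (\<lambda>x. L (u x))" by blast
  have "\<forall>x\<in>S. (f has_derivative (\<lambda>v. L (frechet_derivative u (at x) v))) (at x)"
    using u smooth_on_differentiable frechet_derivative_works
      bounded_linear.has_derivative[OF assms(3)] by blast
  moreover have "\<exists>u'. smooth_on S u' \<and> (\<lambda>x. L (frechet_derivative u (at x) v)) = (\<lambda>x. L (u' x))" for v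
    using smooth_on_frechet_derivative[OF u(1)] by blast
  ultimately show "\<exists>D. (\<forall>x\<in>S. (f has_derivative D x) (at x)) \<and>
      (\<forall>v. \<exists>u. smooth_on S u \<and> (\<lambda>x. D x v) = (\<lambda>x. L (u x)))"
    by (intro exI[of _ "\<lambda>x v. L (frechet_derivative u (at x) v)"]) simp
qed (use assms in blast)+

text \<open>Unlike the compositions \<open>F \<circ> h\<close> alone, this class is closed under directional derivatives,
  which makes the chain rule for \<open>smooth_on\<close> provable by coinduction.\<close>
inductive pullback_span ::
    "'a::real_normed_vector set \<Rightarrow> 'e::euclidean_space set \<Rightarrow> ('a \<Rightarrow> 'e) \<Rightarrow> ('a \<Rightarrow> 'c::real_normed_vector) \<Rightarrow> bool"
  for S S' h where
  comp: "smooth_on S' F \<Longrightarrow> pullback_span S S' h (F \<circ> h)"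
| add: "pullback_span S S' h f \<Longrightarrow> pullback_span S S' h g \<Longrightarrow> pullback_span S S' h (\<lambda>x. f x + g x)"
| scale: "smooth_on S a \<Longrightarrow> pullback_span S S' h f \<Longrightarrow> pullback_span S S' h (\<lambda>x. a x *\<^sub>R f x)"

lemma pullback_span_sum:
  assumes "finite I" "I \<noteq> {}" "\<And>i. i \<in> I \<Longrightarrow> pullback_span S S' h (f i)"
  shows "pullback_span S S' h (\<lambda>x. \<Sum>i\<in>I. f i x)"
  using assms by (induction I rule: finite_ne_induct) (auto intro: pullback_span.add)

lemma has_derivative_compose_Basis:
  fixes h :: "'a::real_normed_vector \<Rightarrow> 'e::euclidean_space"
  assumes "(h has_derivative h') (at x)" "(F has_derivative F') (at (h x))"
  shows "(F \<circ> h has_derivative (\<lambda>v. \<Sum>i\<in>Basis. (h' v \<bullet> i) *\<^sub>R F' i)) (at x)"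
proof -
  have "F' (h' v) = (\<Sum>i\<in>Basis. (h' v \<bullet> i) *\<^sub>R F' i)" for v
    using linear_sum[OF has_derivative_linear[OF assms(2)]]
      linear_scale[OF has_derivative_linear[OF assms(2)]]
    by (metis (no_types, lifting) euclidean_representation sum.cong)
  then show ?thesis using diff_chain_at[OF assms] by (simp add: o_def)
qed

lemma pullback_span_has_derivative:
  assumes "pullback_span S S' h f" "open S" "smooth_on S h" "h ` S \<subseteq> S'"
  shows "\<exists>D. (\<forall>x\<in>S. (f has_derivative D x) (at x)) \<and> (\<forall>v. pullback_span S S' h (\<lambda>x. D x v))"
  using assms(1)
proof induction
  case (comp F)
  let ?D = "\<lambda>x v. \<Sum>i\<in>Basis. (frechet_derivative h (at x) v \<bullet> i) *\<^sub>R frechet_derivative F (at (h x)) i"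
  have "(F \<circ> h has_derivative ?D x) (at x)" if "x \<in> S" for x
    using that assms(4) by (intro has_derivative_compose_Basis smooth_on_has_derivative[OF assms(3)]
        smooth_on_has_derivative[OF comp.hyps]) auto
  moreover have "pullback_span S S' h (\<lambda>x. ?D x v)" for v
  proof (rule pullback_span_sum)
    fix i
    have "smooth_on S (\<lambda>x. frechet_derivative h (at x) v \<bullet> i)"
      using smooth_on_bounded_linear[OF smooth_on_frechet_derivative[OF assms(3)] assms(2)]
        bounded_linear_inner_left by blast
    moreover have "pullback_span S S' h ((\<lambda>y. frechet_derivative F (at y) i) \<circ> h)"
      using pullback_span.comp smooth_on_frechet_derivative[OF comp.hyps] by blast
    ultimately show "pullback_span S S' h
        (\<lambda>x. (frechet_derivative h (at x) v \<bullet> i) *\<^sub>R frechet_derivative F (at (h x)) i)"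
      using pullback_span.scale by (simp add: o_def)
  qed auto
  ultimately show ?case by (intro exI[of _ ?D]) blast
next
  case (add f g)
  then obtain Df Dg where "\<forall>x\<in>S. (f has_derivative Df x) (at x)" "\<forall>v. pullback_span S S' h (\<lambda>x. Df x v)"
    "\<forall>x\<in>S. (g has_derivative Dg x) (at x)" "\<forall>v. pullback_span S S' h (\<lambda>x. Dg x v)"
    by blast
  then show ?case
    by (intro exI[of _ "\<lambda>x v. Df x v + Dg x v"]) (auto intro: has_derivative_add pullback_span.add)
next
  case (scale a f)
  then obtain Df where Df: "\<forall>x\<in>S. (f has_derivative Df x) (at x)" "\<forall>v. pullback_span S S' h (\<lambda>x. Df x v)"
    by blast
  let ?Da = "\<lambda>x. frechet_derivative a (at x)"
  have "((\<lambda>x. a x *\<^sub>R f x) has_derivative (\<lambda>v. a x *\<^sub>R Df x v + ?Da x v *\<^sub>R f x)) (at x)"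
    if "x \<in> S" for x
    using that Df(1) by (intro has_derivative_scaleR smooth_on_has_derivative[OF scale.hyps(1)]) auto
  moreover have "pullback_span S S' h (\<lambda>x. a x *\<^sub>R Df x v + ?Da x v *\<^sub>R f x)" for v
    by (intro pullback_span.add pullback_span.scale Df(2)[rule_format] scale.hyps
        smooth_on_frechet_derivative)
  ultimately show ?case by (intro exI[of _ "\<lambda>x v. a x *\<^sub>R Df x v + ?Da x v *\<^sub>R f x"]) blast
qed

lemma smooth_on_compose:
  fixes h :: "'a::real_normed_vector \<Rightarrow> 'e::euclidean_space"
  assumes "smooth_on S' F" "smooth_on S h" "h ` S \<subseteq> S'" "open S"
  shows "smooth_on S (F \<circ> h)"
  by (rule smooth_on_coinduct_open[where P = "pullback_span S S' h", OF assms(4) pullback_span.comp[OF assms(1)]])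
    (rule pullback_span_has_derivative[OF _ assms(4,2,3)])

lemma chart_image_open:
  assumes "is_chart X (U, \<phi>)" "openin X W" "W \<subseteq> U"
  shows "open (\<phi> ` W)"
proof -
  have inv: "continuous_map (subtopology euclidean (\<phi> ` U)) X (inv_into U \<phi>)"
    and "open (\<phi> ` U)" "inj_on \<phi> U"
    using assms(1) by (auto simp: is_chart_def)
  have "openin (top_of_set (\<phi> ` U)) {z \<in> \<phi> ` U. inv_into U \<phi> z \<in> W}"
    using openin_continuous_map_preimage[OF inv assms(2)] by simp
  moreover have "{z \<in> \<phi> ` U. inv_into U \<phi> z \<in> W} = \<phi> ` W"
    using assms(3) \<open>inj_on \<phi> U\<close> by (auto simp: inv_into_f_f)
  ultimately show ?thesis using \<open>open (\<phi> ` U)\<close> openin_open_trans by metis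
qed

lemma smooth_atlas_chartD:
  assumes "smooth_atlas X A" "(U, \<phi>) \<in> A"
  shows "is_chart X (U, \<phi>)" "openin X U" "U \<subseteq> topspace X" "inj_on \<phi> U"
proof -
  show chart: "is_chart X (U, \<phi>)" using assms by (auto simp: smooth_atlas_def)
  then show "openin X U" "inj_on \<phi> U" by (simp_all add: is_chart_def)
  then show "U \<subseteq> topspace X" using openin_subset by blast
qed

lemma smooth_atlas_cover:
  assumes "smooth_atlas X A" "x \<in> topspace X"
  obtains U \<phi> where "(U, \<phi>) \<in> A" "x \<in> U"
proof -
  obtain c where "c \<in> A" "x \<in> fst c" using assms unfolding smooth_atlas_def by blast
  then show ?thesis by (intro that[of "fst c" "snd c"]) auto
qed

lemma chart_preimage_open:
  assumes "smooth_atlas X A" "(U, \<phi>) \<in> A" "continuous_map X X f" "openin X V"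
  shows "openin X (U \<inter> f -` V)" "open (\<phi> ` (U \<inter> f -` V))"
proof -
  have "U \<inter> f -` V = U \<inter> {x \<in> topspace X. f x \<in> V}"
    using smooth_atlas_chartD(3)[OF assms(1,2)] by auto
  then show "openin X (U \<inter> f -` V)"
    using smooth_atlas_chartD(2)[OF assms(1,2)] openin_continuous_map_preimage[OF assms(3,4)] by auto
  then show "open (\<phi> ` (U \<inter> f -` V))"
    using chart_image_open smooth_atlas_chartD(1)[OF assms(1,2)] by blast
qed

lemma smooth_map_continuous: "smooth_map X A f \<Longrightarrow> continuous_map X X f"
  by (simp add: smooth_map_def)

lemma smooth_map_chart:
  assumes "smooth_map X A f" "(U, \<phi>) \<in> A" "(V, \<psi>) \<in> A"
  shows "smooth_on (\<phi> ` (U \<inter> f -` V)) (\<psi> \<circ> f \<circ> inv_into U \<phi>)"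
  using case_prodD[OF bspec[OF case_prodD[OF bspec[OF conjunct2[OF assms(1)[unfolded smooth_map_def]]
        assms(2)]] assms(3)]] .

definition cone_preserving ::
    "'p topology \<Rightarrow> ('p, 'e::euclidean_space) chart set \<Rightarrow> ('p, 'e) cone_field \<Rightarrow> ('p \<Rightarrow> 'p) \<Rightarrow> bool" where
  "cone_preserving X A Cf f \<longleftrightarrow> (\<forall>(U, \<phi>)\<in>A. \<forall>(V, \<psi>)\<in>A. \<forall>x\<in>U. f x \<in> V \<longrightarrow>
     frechet_derivative (\<psi> \<circ> f \<circ> inv_into U \<phi>) (at (\<phi> x)) ` Cf x (U, \<phi>) = Cf (f x) (V, \<psi>))"

lemma cone_group_iff: "f \<in> cone_group X A Cf \<longleftrightarrow> diffeo X A f \<and> cone_preserving X A Cf f"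
  by (simp add: cone_group_def cone_preserving_def)

lemma cone_preservingD:
  assumes "cone_preserving X A Cf f" "(U, \<phi>) \<in> A" "(V, \<psi>) \<in> A" "x \<in> U" "f x \<in> V"
  shows "frechet_derivative (\<psi> \<circ> f \<circ> inv_into U \<phi>) (at (\<phi> x)) ` Cf x (U, \<phi>) = Cf (f x) (V, \<psi>)"
  using case_prodD[OF bspec[OF case_prodD[OF bspec[OF assms(1)[unfolded cone_preserving_def]
        assms(2)]] assms(3)]] assms(4,5) by blast

lemma continuous_map_ball_into_openin:
  fixes \<gamma> :: "'a::metric_space \<Rightarrow> 'p"
  assumes "continuous_map (top_of_set S) X \<gamma>" "t \<in> S" "openin X W" "\<gamma> t \<in> W"
  obtains \<epsilon> where "\<epsilon> > 0" "\<And>r. r \<in> S \<Longrightarrow> dist r t < \<epsilon> \<Longrightarrow> \<gamma> r \<in> W"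
proof -
  have "openin (top_of_set S) {r \<in> S. \<gamma> r \<in> W}"
    using openin_continuous_map_preimage[OF assms(1,3)] by simp
  then obtain \<Omega> where \<Omega>: "open \<Omega>" "{r \<in> S. \<gamma> r \<in> W} = S \<inter> \<Omega>"
    unfolding openin_open by blast
  then obtain \<epsilon> where "\<epsilon> > 0" "ball t \<epsilon> \<subseteq> \<Omega>"
    using assms(2,4) open_contains_ball by blast
  show ?thesis
  proof (rule that[OF \<open>\<epsilon> > 0\<close>])
    fix r assume "r \<in> S" "dist r t < \<epsilon>"
    then have "r \<in> \<Omega>" using \<open>ball t \<epsilon> \<subseteq> \<Omega>\<close> by (auto simp: dist_commute)
    then show "\<gamma> r \<in> W" using \<Omega>(2) \<open>r \<in> S\<close> by blast
  qed
qed

lemma smooth_piece_compose: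
  assumes atlas: "smooth_atlas X A" and f: "smooth_map X A f"
    and \<gamma>: "continuous_map (top_of_set {a..b}) X \<gamma>" and st: "{s..t} \<subseteq> {a..b}"
    and piece: "smooth_piece X A \<gamma> s t"
  shows "smooth_piece X A (f \<circ> \<gamma>) s t"
  unfolding smooth_piece_def
proof (intro ballI, clarify)
  fix \<tau> V \<psi> assume \<tau>: "\<tau> \<in> {s..t}" and V: "(V, \<psi>) \<in> A" and fV: "(f \<circ> \<gamma>) \<tau> \<in> V"
  have "\<gamma> \<tau> \<in> topspace X" using \<tau> st continuous_map_image_subset_topspace[OF \<gamma>] by auto
  then obtain U \<phi> where U: "(U, \<phi>) \<in> A" "\<gamma> \<tau> \<in> U" using smooth_atlas_cover[OF atlas] by blast
  then obtain e h where "e > 0" and h: "smooth_on (ball \<tau> e) h"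
    and h_eq: "\<forall>r\<in>ball \<tau> e \<inter> {s..t}. \<gamma> r \<in> U \<and> \<phi> (\<gamma> r) = h r"
    using case_prodD[OF bspec[OF bspec[OF piece[unfolded smooth_piece_def] \<tau>] U(1)]] U(2) by blast
  define \<Omega> where "\<Omega> = \<phi> ` (U \<inter> f -` V)"
  have "h \<tau> \<in> \<Omega>" using h_eq \<tau> \<open>e > 0\<close> U fV by (force simp: \<Omega>_def)
  moreover have "open \<Omega>"
    unfolding \<Omega>_def using chart_preimage_open(2) atlas U(1) V smooth_map_continuous[OF f]
      smooth_atlas_chartD(2) by blast
  ultimately obtain \<epsilon> where "\<epsilon> > 0" "ball (h \<tau>) \<epsilon> \<subseteq> \<Omega>" using open_contains_ball by blast
  moreover have "h differentiable at \<tau>" using smooth_on_differentiable[OF h] \<open>e > 0\<close> by simp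
  then have "continuous (at \<tau>) h" by (rule differentiable_imp_continuous_within)
  ultimately obtain \<delta> where "\<delta> > 0" "h ` ball \<tau> \<delta> \<subseteq> \<Omega>"
    unfolding continuous_within_ball by (metis Int_UNIV_right subset_trans)
  define e' where "e' = min e \<delta>"
  let ?k = "\<psi> \<circ> f \<circ> inv_into U \<phi> \<circ> h"
  have "ball \<tau> e' \<subseteq> ball \<tau> e" "h ` ball \<tau> e' \<subseteq> \<Omega>"
    using \<open>h ` ball \<tau> \<delta> \<subseteq> \<Omega>\<close> by (auto simp: e'_def)
  then have "smooth_on (ball \<tau> e') ?k"
    using smooth_on_compose[OF smooth_map_chart[OF f U(1) V] smooth_on_subset[OF h]]
    by (simp add: \<Omega>_def o_assoc)
  moreover have "(f \<circ> \<gamma>) r \<in> V \<and> \<psi> ((f \<circ> \<gamma>) r) = ?k r" if r: "r \<in> ball \<tau> e' \<inter> {s..t}" for r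
  proof -
    have \<gamma>r: "\<gamma> r \<in> U" "\<phi> (\<gamma> r) = h r" using h_eq r by (auto simp: e'_def)
    have "h r \<in> \<Omega>" using \<open>h ` ball \<tau> \<delta> \<subseteq> \<Omega>\<close> r by (auto simp: e'_def)
    then obtain u where "u \<in> U" "f u \<in> V" "h r = \<phi> u" by (auto simp: \<Omega>_def)
    moreover have "inj_on \<phi> U" using smooth_atlas_chartD(4)[OF atlas U(1)] .
    ultimately have "u = \<gamma> r" "inv_into U \<phi> (h r) = \<gamma> r"
      using \<gamma>r by (metis inj_onD, metis inv_into_f_f)
    then show ?thesis using \<open>f u \<in> V\<close> by simp
  qed
  ultimately show "\<exists>e>0. \<exists>h. smooth_on (ball \<tau> e) h \<and>
      (\<forall>r\<in>ball \<tau> e \<inter> {s..t}. (f \<circ> \<gamma>) r \<in> V \<and> \<psi> ((f \<circ> \<gamma>) r) = h r)"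
    using \<open>e > 0\<close> \<open>\<delta> > 0\<close> by (intro exI[of _ e'] exI[of _ ?k]) (auto simp: e'_def)
qed

lemma piecewise_smooth_curve_compose:
  assumes "smooth_atlas X A" "smooth_map X A f" "piecewise_smooth_curve X A \<gamma> a b"
  shows "piecewise_smooth_curve X A (f \<circ> \<gamma>) a b"
proof -
  obtain P where P: "finite P" "a \<in> P" "b \<in> P" "P \<subseteq> {a..b}"
    and pieces: "\<forall>s\<in>P. \<forall>t\<in>P. s < t \<and> {s<..<t} \<inter> P = {} \<longrightarrow> smooth_piece X A \<gamma> s t"
    using assms(3) unfolding piecewise_smooth_curve_def by blast
  have \<gamma>: "continuous_map (top_of_set {a..b}) X \<gamma>" and "a \<le> b"
    using assms(3) by (simp_all add: piecewise_smooth_curve_def)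
  have "smooth_piece X A (f \<circ> \<gamma>) s t" if "s \<in> P" "t \<in> P" "s < t" "{s<..<t} \<inter> P = {}" for s t
    using that P(4) pieces by (intro smooth_piece_compose[OF assms(1,2) \<gamma>]) auto
  moreover have "continuous_map (top_of_set {a..b}) X (f \<circ> \<gamma>)"
    using continuous_map_compose[OF \<gamma> smooth_map_continuous[OF assms(2)]] .
  ultimately show ?thesis unfolding piecewise_smooth_curve_def using P \<open>a \<le> b\<close> by blast
qed

lemma has_vector_derivative_chart_compose:
  assumes atlas: "smooth_atlas X A" and f: "smooth_map X A f" "cone_preserving X A Cf f"
    and \<gamma>: "continuous_map (top_of_set {a..b}) X \<gamma>" and t: "t \<in> {a..b}"
    and U: "(U, \<phi>) \<in> A" "\<gamma> t \<in> U" and V: "(V, \<psi>) \<in> A" "f (\<gamma> t) \<in> V"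
    and v: "((\<phi> \<circ> \<gamma>) has_vector_derivative v) (at t within {a..b})" "v \<in> Cf (\<gamma> t) (U, \<phi>)"
  shows "\<exists>w. ((\<psi> \<circ> (f \<circ> \<gamma>)) has_vector_derivative w) (at t within {a..b}) \<and> w \<in> Cf (f (\<gamma> t)) (V, \<psi>)"
proof -
  define G where "G = \<psi> \<circ> f \<circ> inv_into U \<phi>"
  define DG where "DG = frechet_derivative G (at (\<phi> (\<gamma> t)))"
  have "openin X (U \<inter> f -` V)"
    using chart_preimage_open(1)[OF atlas U(1) smooth_map_continuous[OF f(1)]]
      smooth_atlas_chartD(2)[OF atlas V(1)] .
  then obtain \<epsilon> where "\<epsilon> > 0" and near: "\<And>r. r \<in> {a..b} \<Longrightarrow> dist r t < \<epsilon> \<Longrightarrow> \<gamma> r \<in> U"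
    using continuous_map_ball_into_openin[OF \<gamma> t] U(2) V(2) by (metis IntD1 IntI vimageI)
  have "(G has_derivative DG) (at ((\<phi> \<circ> \<gamma>) t))"
    unfolding DG_def G_def using smooth_on_has_derivative[OF smooth_map_chart[OF f(1) U(1) V(1)]] U(2) V(2)
    by simp
  then have "((G \<circ> (\<phi> \<circ> \<gamma>)) has_vector_derivative DG v) (at t within {a..b})"
    using vector_derivative_diff_chain_within[OF v(1)] has_derivative_at_withinI by blast
  moreover have "(G \<circ> (\<phi> \<circ> \<gamma>)) r = (\<psi> \<circ> (f \<circ> \<gamma>)) r" if "r \<in> {a..b}" "dist r t < \<epsilon>" for r
    using near[OF that] inv_into_f_f[OF smooth_atlas_chartD(4)[OF atlas U(1)]] by (simp add: G_def)
  ultimately have "((\<psi> \<circ> (f \<circ> \<gamma>)) has_vector_derivative DG v) (at t within {a..b})"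
    using has_vector_derivative_transform_within \<open>\<epsilon> > 0\<close> t by blast
  moreover have "DG v \<in> Cf (f (\<gamma> t)) (V, \<psi>)"
    using cone_preservingD[OF f(2) U(1) V(1) U(2) V(2)] v(2) by (auto simp: DG_def G_def)
  ultimately show ?thesis by blast
qed

lemma causal_curve_compose:
  assumes atlas: "smooth_atlas X A" and f: "smooth_map X A f" "cone_preserving X A Cf f"
    and \<gamma>: "causal_curve X A Cf \<gamma> a b"
  shows "causal_curve X A Cf (f \<circ> \<gamma>) a b"
proof -
  obtain F where "finite F" and tangent: "\<forall>t\<in>{a..b} - F. \<forall>(U, \<phi>)\<in>A. \<gamma> t \<in> U \<longrightarrow>
      (\<exists>v. ((\<phi> \<circ> \<gamma>) has_vector_derivative v) (at t within {a..b}) \<and> v \<in> Cf (\<gamma> t) (U, \<phi>))"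
    using \<gamma> unfolding causal_curve_def by blast
  have piecewise: "piecewise_smooth_curve X A \<gamma> a b" using \<gamma> by (simp add: causal_curve_def)
  then have cont: "continuous_map (top_of_set {a..b}) X \<gamma>" by (simp add: piecewise_smooth_curve_def)
  have "\<exists>w. ((\<psi> \<circ> (f \<circ> \<gamma>)) has_vector_derivative w) (at t within {a..b}) \<and> w \<in> Cf ((f \<circ> \<gamma>) t) (V, \<psi>)"
    if t: "t \<in> {a..b} - F" and V: "(V, \<psi>) \<in> A" "(f \<circ> \<gamma>) t \<in> V" for t V \<psi>
  proof -
    have "\<gamma> t \<in> topspace X" using t continuous_map_image_subset_topspace[OF cont] by auto
    then obtain U \<phi> where U: "(U, \<phi>) \<in> A" "\<gamma> t \<in> U" using smooth_atlas_cover[OF atlas] by blast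
    then obtain v where "((\<phi> \<circ> \<gamma>) has_vector_derivative v) (at t within {a..b})" "v \<in> Cf (\<gamma> t) (U, \<phi>)"
      using case_prodD[OF bspec[OF bspec[OF tangent t] U(1)]] by blast
    then show ?thesis
      using has_vector_derivative_chart_compose[OF atlas f cont _ U V(1)] t V(2) by simp
  qed
  then show ?thesis
    unfolding causal_curve_def using piecewise_smooth_curve_compose[OF atlas f(1) piecewise] \<open>finite F\<close>
    by blast
qed


lemma causal_s_image:
  assumes "smooth_atlas X A" "smooth_map X A f" "cone_preserving X A Cf f"
    and "(x, y) \<in> causal_s X A Cf"
  shows "(f x, f y) \<in> causal_s X A Cf"
proof -
  obtain \<gamma> a b where "causal_curve X A Cf \<gamma> a b" "\<gamma> a = x" "\<gamma> b = y"
    using assms(4) unfolding causal_s_def by blast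
  then have "causal_curve X A Cf (f \<circ> \<gamma>) a b" "(f \<circ> \<gamma>) a = f x" "(f \<circ> \<gamma>) b = f y"
    using causal_curve_compose[OF assms(1-3)] by auto
  then show ?thesis unfolding causal_s_def by blast
qed

lemma causal_rel_image:
  assumes "smooth_atlas X A" "smooth_map X A f" "cone_preserving X A Cf f"
    and "(x, y) \<in> causal_rel X A Cf"
  shows "(f x, f y) \<in> causal_rel X A Cf"
proof -
  define ff where "ff = (\<lambda>(x, y). (f x, f y))"
  have "continuous_map (prod_topology X X) (prod_topology X X) ff"
    unfolding ff_def continuous_map_prod_top using smooth_map_continuous[OF assms(2)] by blast
  then have "ff ` causal_rel X A Cf \<subseteq> prod_topology X X closure_of (ff ` causal_s X A Cf)"
    unfolding causal_rel_def by (rule continuous_map_image_closure_subset)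
  also have "\<dots> \<subseteq> causal_rel X A Cf"
    unfolding causal_rel_def ff_def using causal_s_image[OF assms(1-3)] by (intro closure_of_mono) auto
  finally show ?thesis using assms(4) unfolding ff_def by force
qed

lemma frechet_derivative_left_inverse:
  assumes "open \<Omega>" "w \<in> \<Omega>" "\<And>z. z \<in> \<Omega> \<Longrightarrow> F (G z) = z"
    and "G differentiable at w" "F differentiable at (G w)"
  shows "frechet_derivative F (at (G w)) \<circ> frechet_derivative G (at w) = id"
proof -
  have "frechet_derivative (F \<circ> G) (at w) = frechet_derivative id (at w)"
    using assms by (intro frechet_derivative_transform_within_open[OF differentiable_chain_at]) auto
  then show ?thesis using frechet_derivative_compose[OF assms(4,5)] by simp
qed

lemma cone_group_inv_cone_preserving:
  assumes atlas: "smooth_atlas X A" and f: "f \<in> cone_group X A Cf"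
  shows "cone_preserving X A Cf (inv_into (topspace X) f)"
  unfolding cone_preserving_def
proof (clarify)
  fix U \<phi> V \<psi> x
  assume U: "(U, \<phi>) \<in> A" and V: "(V, \<psi>) \<in> A" and x: "x \<in> U" and gx: "inv_into (topspace X) f x \<in> V"
  let ?g = "inv_into (topspace X) f"
  have diffeo: "bij_betw f (topspace X) (topspace X)" "smooth_map X A f" "smooth_map X A ?g"
    and cone_f: "cone_preserving X A Cf f"
    using f unfolding cone_group_iff diffeo_def by blast+
  have inj: "inj_on f (topspace X)" "inj_on \<phi> U" "inj_on \<psi> V"
    using diffeo(1) smooth_atlas_chartD(4)[OF atlas U] smooth_atlas_chartD(4)[OF atlas V]
    by (auto simp: bij_betw_def)
  define y where "y = ?g x"
  have "x \<in> f ` topspace X" using x smooth_atlas_chartD(3)[OF atlas U] diffeo(1) by (auto simp: bij_betw_def)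
  then have y: "y \<in> V" "f y = x" using gx by (simp_all add: y_def f_inv_into_f)
  define F where "F = \<psi> \<circ> ?g \<circ> inv_into U \<phi>"
  define G where "G = \<phi> \<circ> f \<circ> inv_into V \<psi>"
  define \<Omega> where "\<Omega> = \<psi> ` (V \<inter> f -` U)"
  have "F (G z) = z" if z: "z \<in> \<Omega>" for z
  proof -
    obtain v where v: "v \<in> V" "f v \<in> U" "z = \<psi> v" using z by (auto simp: \<Omega>_def)
    have "v \<in> topspace X" using v(1) smooth_atlas_chartD(3)[OF atlas V] by blast
    then show ?thesis using v inj by (simp add: F_def G_def inv_into_f_f)
  qed
  moreover have "open \<Omega>" "\<psi> y \<in> \<Omega>"
    using chart_preimage_open(2)[OF atlas V smooth_map_continuous[OF diffeo(2)]]
      smooth_atlas_chartD(2)[OF atlas U] y x by (auto simp: \<Omega>_def)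
  moreover have "G differentiable at (\<psi> y)"
    using smooth_on_differentiable[OF smooth_map_chart[OF diffeo(2) V U]] \<open>\<psi> y \<in> \<Omega>\<close>
    by (simp add: G_def \<Omega>_def)
  moreover have "G (\<psi> y) = \<phi> x" using y inj(3) by (simp add: G_def inv_into_f_f)
  moreover have "F differentiable at (\<phi> x)"
    using smooth_on_differentiable[OF smooth_map_chart[OF diffeo(3) U V]] x gx by (simp add: F_def)
  ultimately have inverse: "frechet_derivative F (at (\<phi> x)) \<circ> frechet_derivative G (at (\<psi> y)) = id"
    using frechet_derivative_left_inverse[of \<Omega> "\<psi> y" F G] by simp
  have "Cf x (U, \<phi>) = frechet_derivative G (at (\<psi> y)) ` Cf y (V, \<psi>)"
    using cone_preservingD[OF cone_f V U y(1)] y(2) x by (simp add: G_def)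
  then have "frechet_derivative F (at (\<phi> x)) ` Cf x (U, \<phi>) = Cf y (V, \<psi>)"
    by (simp add: image_comp inverse)
  then show "frechet_derivative (\<psi> \<circ> ?g \<circ> inv_into U \<phi>) (at (\<phi> x)) ` Cf x (U, \<phi>) = Cf (?g x) (V, \<psi>)"
    by (simp add: F_def y_def)
qed

lemma cone_group_causal_rel_image:
  assumes "smooth_atlas X A" "f \<in> cone_group X A Cf" "(x, y) \<in> causal_rel X A Cf"
  shows "(f x, f y) \<in> causal_rel X A Cf"
    and "(inv_into (topspace X) f x, inv_into (topspace X) f y) \<in> causal_rel X A Cf"
proof -
  have "smooth_map X A f" "cone_preserving X A Cf f" "smooth_map X A (inv_into (topspace X) f)"
    using assms(2) unfolding cone_group_iff diffeo_def by blast+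
  then show "(f x, f y) \<in> causal_rel X A Cf"
    and "(inv_into (topspace X) f x, inv_into (topspace X) f y) \<in> causal_rel X A Cf"
    using causal_rel_image[OF assms(1) _ _ assms(3)] cone_group_inv_cone_preserving[OF assms(1,2)]
    by blast+
qed

locale self_bijection =
  fixes X :: "'p topology" and T :: "'p \<Rightarrow> 'p"
  assumes bij_T: "bij_betw T (topspace X) (topspace X)"
begin

abbreviation T_inv :: "'p \<Rightarrow> 'p" where "T_inv \<equiv> inv_into (topspace X) T"

lemma T_in_topspace: "x \<in> topspace X \<Longrightarrow> T x \<in> topspace X"
  and T_inv_in_topspace: "x \<in> topspace X \<Longrightarrow> T_inv x \<in> topspace X"
  and T_T_inv: "x \<in> topspace X \<Longrightarrow> T (T_inv x) = x"
  and T_inv_T: "x \<in> topspace X \<Longrightarrow> T_inv (T x) = x"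
  using bij_T by (auto simp: bij_betw_def inv_into_into f_inv_into_f inv_into_f_f)

lemma funpow_in_topspace:
  "(\<And>x. x \<in> topspace X \<Longrightarrow> f x \<in> topspace X) \<Longrightarrow> x \<in> topspace X \<Longrightarrow> (f ^^ n) x \<in> topspace X"
  by (induction n) auto

lemma Tpow_in_topspace: "x \<in> topspace X \<Longrightarrow> Tpow X T k x \<in> topspace X"
  unfolding Tpow_def using funpow_in_topspace T_in_topspace T_inv_in_topspace by simp

lemma Tpow_of_nat: "Tpow X T (int n) = T ^^ n"
  by (simp add: Tpow_def)

lemma Tpow_zero: "Tpow X T 0 x = x"
  by (simp add: Tpow_def)

lemma Tpow_succ:
  assumes "x \<in> topspace X"
  shows "Tpow X T (k + 1) x = T (Tpow X T k x)"
proof -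
  consider "k \<ge> 0" | "k = -1" | "k < -1" by linarith
  then show ?thesis
  proof cases
    case 3
    then have "nat (- k) = Suc (nat (- (k + 1)))" by simp
    then show ?thesis
      using 3 T_T_inv[OF funpow_in_topspace[OF T_inv_in_topspace assms]] by (simp add: Tpow_def)
  qed (simp_all add: Tpow_def nat_add_distrib T_T_inv[OF assms])
qed

lemma Tpow_add:
  assumes "x \<in> topspace X"
  shows "Tpow X T i (Tpow X T j x) = Tpow X T (i + j) x"
proof (induction i rule: int_induct[where k = 0])
  case (step1 i)
  then show ?case
    using Tpow_succ[OF Tpow_in_topspace[OF assms], of i] Tpow_succ[OF assms, of "i + j"]
    by (simp add: algebra_simps)
next
  case (step2 i)
  have pred: "Tpow X T (k - 1) y = T_inv (Tpow X T k y)" if "y \<in> topspace X" for y k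
    using Tpow_succ[OF that, of "k - 1"] T_inv_T[OF Tpow_in_topspace[OF that]] by simp
  show ?case
    using step2 pred[OF Tpow_in_topspace[OF assms], of i] pred[OF assms, of "i + j"]
    by (simp add: algebra_simps)
qed (simp add: Tpow_zero)

lemma Tpow_neg_cancel: "x \<in> topspace X \<Longrightarrow> Tpow X T (- k) (Tpow X T k x) = x"
  by (simp add: Tpow_add Tpow_zero)

lemma orb_eq_Tpow: "orb X T a = orb X T w \<Longrightarrow> \<exists>k. a = Tpow X T k w"
  using rangeI[of "\<lambda>k. Tpow X T k a" 0] by (auto simp: orb_def Tpow_zero)

lemma commute_funpow:
  assumes "\<And>x. x \<in> topspace X \<Longrightarrow> g (T x) = T (g x)" "\<And>x. x \<in> topspace X \<Longrightarrow> g x \<in> topspace X"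
    and "x \<in> topspace X"
  shows "g ((T ^^ n) x) = (T ^^ n) (g x)"
  using assms(3) by (induction n) (auto simp: assms(1,2) funpow_in_topspace T_in_topspace)

end

locale order_translation = self_bijection X T for X :: "'p topology" and T +
  fixes R :: "('p \<times> 'p) set"
  assumes trans_R: "trans R"
    and refl_R: "x \<in> topspace X \<Longrightarrow> (x, x) \<in> R"
    and T_mono: "(x, y) \<in> R \<Longrightarrow> (T x, T y) \<in> R"
    and T_inv_mono: "(x, y) \<in> R \<Longrightarrow> (T_inv x, T_inv y) \<in> R"
begin

lemma R_trans: "(x, y) \<in> R \<Longrightarrow> (y, z) \<in> R \<Longrightarrow> (x, z) \<in> R"
  using trans_R by (rule transD)

lemma Tpow_mono: "(x, y) \<in> R \<Longrightarrow> (Tpow X T k x, Tpow X T k y) \<in> R"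
proof -
  assume "(x, y) \<in> R"
  then have "((f ^^ n) x, (f ^^ n) y) \<in> R" if "\<And>x y. (x, y) \<in> R \<Longrightarrow> (f x, f y) \<in> R" for f n
    by (induction n) (auto intro: that)
  then show ?thesis unfolding Tpow_def using T_mono T_inv_mono by simp
qed

lemma Tpow_trans:
  assumes "(x, Tpow X T k y) \<in> R" "(y, Tpow X T l z) \<in> R" "z \<in> topspace X"
  shows "(x, Tpow X T (k + l) z) \<in> R"
  using R_trans[OF assms(1) Tpow_mono[OF assms(2)]] by (simp add: Tpow_add assms(3))

lemma Tpow_transport:
  assumes "(x, Tpow X T k y) \<in> R" "y \<in> topspace X"
  shows "(Tpow X T i x, Tpow X T (i + k - j) (Tpow X T j y)) \<in> R"
  using Tpow_mono[OF assms(1), of i] by (simp add: Tpow_add assms(2))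

lemma recurrence_iterate:
  assumes "\<And>x. x \<in> topspace X \<Longrightarrow> (x, (T ^^ n) x) \<in> R" "x \<in> topspace X"
  shows "(x, (T ^^ (m * n)) x) \<in> R"
proof (induction m)
  case (Suc m)
  have "((T ^^ (m * n)) x, (T ^^ n) ((T ^^ (m * n)) x)) \<in> R"
    using assms funpow_in_topspace T_in_topspace by blast
  then show ?case using R_trans[OF Suc.IH] by (simp add: funpow_add)
qed (simp add: refl_R assms(2))

lemma recurrence_reduce_exponent:
  assumes "\<And>x. x \<in> topspace X \<Longrightarrow> (x, (T ^^ n) x) \<in> R" "n > 0"
    and "w \<in> topspace X" "(u, Tpow X T s w) \<in> R"
  shows "\<exists>k < nat s + n. (u, (T ^^ k) w) \<in> R"
proof (cases "s \<ge> 0")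
  case True
  then show ?thesis using assms(2,4) Tpow_of_nat[of "nat s"] by (intro exI[of _ "nat s"]) simp
next
  case False
  define m where "m = nat (- (s div int n))"
  define r where "r = s mod int n"
  have r: "r = int (m * n) + s" "0 \<le> r" "r < int n"
    using False assms(2) minus_div_mult_eq_mod[of s "int n"]
    by (simp_all add: m_def r_def div_nonpos_pos_le0)
  then have "(T ^^ (m * n)) (Tpow X T s w) = (T ^^ nat r) w"
    using Tpow_add[OF assms(3), of "int (m * n)" s] by (simp add: Tpow_of_nat[symmetric])
  moreover have "(Tpow X T s w, (T ^^ (m * n)) (Tpow X T s w)) \<in> R"
    using recurrence_iterate[OF assms(1) Tpow_in_topspace[OF assms(3)]] .
  ultimately have "(u, (T ^^ nat r) w) \<in> R" using R_trans[OF assms(4)] by simp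
  moreover have "nat r < n" using r(2,3) by (simp add: nat_less_iff)
  ultimately show ?thesis by (intro exI[of _ "nat r"]) simp
qed

text \<open>\<open>G\<close> stands for the centralizer of \<open>T\<close>, and \<open>orbit_chain\<close> is almost 2-transitivity of its
  action on the \<open>\<Gamma>\<close>-orbits, read in \<open>X\<close> for the orbit of the pair of orbits of \<open>a\<^sub>0\<close> and \<open>c\<^sub>0\<close>.\<close>
context
  fixes G :: "('p \<Rightarrow> 'p) set" and a\<^sub>0 c\<^sub>0 :: 'p
  assumes G_commute: "\<And>g x. g \<in> G \<Longrightarrow> x \<in> topspace X \<Longrightarrow> g (T x) = T (g x)"
    and G_topspace: "\<And>g x. g \<in> G \<Longrightarrow> x \<in> topspace X \<Longrightarrow> g x \<in> topspace X"
    and G_mono: "\<And>g x y. g \<in> G \<Longrightarrow> (x, y) \<in> R \<Longrightarrow> (g x, g y) \<in> R"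
    and a\<^sub>0: "a\<^sub>0 \<in> topspace X" and c\<^sub>0: "c\<^sub>0 \<in> topspace X"
    and orbit_chain: "\<And>a b. a \<in> topspace X \<Longrightarrow> b \<in> topspace X \<Longrightarrow> \<exists>g\<in>G. \<exists>h\<in>G.
      orb X T a = orb X T (g a\<^sub>0) \<and> orb X T (g c\<^sub>0) = orb X T (h a\<^sub>0) \<and> orb X T (h c\<^sub>0) = orb X T b"
begin

lemma G_funpow_mono:
  assumes "g \<in> G" "y \<in> topspace X" "(x, (T ^^ n) y) \<in> R"
  shows "(g x, Tpow X T (int n) (g y)) \<in> R"
  using G_mono[OF assms(1,3)]
    commute_funpow[where g = g, OF G_commute[OF assms(1)] G_topspace[OF assms(1)] assms(2)]
  by (simp add: Tpow_of_nat)

lemma uniform_recurrence: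
  assumes "(a\<^sub>0, (T ^^ n) a\<^sub>0) \<in> R" "x \<in> topspace X"
  shows "(x, (T ^^ n) x) \<in> R"
proof -
  obtain g where "g \<in> G" "orb X T x = orb X T (g a\<^sub>0)" using orbit_chain[OF assms(2,2)] by blast
  then obtain i where x: "x = Tpow X T i (g a\<^sub>0)" using orb_eq_Tpow by blast
  have "(g a\<^sub>0, Tpow X T (int n) (g a\<^sub>0)) \<in> R" using G_funpow_mono[OF \<open>g \<in> G\<close> a\<^sub>0 assms(1)] .
  from Tpow_transport[OF this G_topspace[OF \<open>g \<in> G\<close> a\<^sub>0], of i i] show ?thesis
    using x Tpow_add G_topspace[OF \<open>g \<in> G\<close> a\<^sub>0] by (simp add: Tpow_of_nat add.commute)
qed

lemma two_sided_shift:
  assumes p: "(c\<^sub>0, (T ^^ p) a\<^sub>0) \<in> R" and q: "(a\<^sub>0, (T ^^ q) c\<^sub>0) \<in> R"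
    and a: "a \<in> topspace X" and b: "b \<in> topspace X"
  shows "\<exists>s t. s + t = 2 * int (p + q) \<and> (a, Tpow X T s b) \<in> R \<and> (b, Tpow X T t a) \<in> R"
proof -
  obtain g h where g: "g \<in> G" and h: "h \<in> G" and orbits: "orb X T a = orb X T (g a\<^sub>0)"
    "orb X T (g c\<^sub>0) = orb X T (h a\<^sub>0)" "orb X T (h c\<^sub>0) = orb X T b"
    using orbit_chain[OF a b] by blast
  then obtain i j l where i: "a = Tpow X T i (g a\<^sub>0)" and j: "g c\<^sub>0 = Tpow X T j (h a\<^sub>0)"
    and l: "b = Tpow X T l (h c\<^sub>0)"
    using orb_eq_Tpow by metis
  note top = G_topspace[OF g a\<^sub>0] G_topspace[OF g c\<^sub>0] G_topspace[OF h a\<^sub>0] G_topspace[OF h c\<^sub>0]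
  have "(g a\<^sub>0, Tpow X T (int q + j) (h a\<^sub>0)) \<in> R"
    using G_funpow_mono[OF g c\<^sub>0 q] j Tpow_add[OF top(3)] by simp
  then have "(g a\<^sub>0, Tpow X T (int q + j + int q) (h c\<^sub>0)) \<in> R"
    using Tpow_trans G_funpow_mono[OF h c\<^sub>0 q] top(4) by blast
  then have ab: "(a, Tpow X T (i + (int q + j + int q) - l) b) \<in> R"
    using Tpow_transport top(4) i l by blast
  have "h a\<^sub>0 = Tpow X T (- j) (g c\<^sub>0)" using j Tpow_neg_cancel[OF top(3)] by simp
  then have "(h c\<^sub>0, Tpow X T (int p - j) (g c\<^sub>0)) \<in> R"
    using G_funpow_mono[OF h a\<^sub>0 p] Tpow_add[OF top(2)] by simp
  then have "(h c\<^sub>0, Tpow X T (int p - j + int p) (g a\<^sub>0)) \<in> R"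
    using Tpow_trans G_funpow_mono[OF g a\<^sub>0 p] top(1) by blast
  then have ba: "(b, Tpow X T (l + (int p - j + int p) - i) a) \<in> R"
    using Tpow_transport top(1) i l by blast
  show ?thesis using ab ba by (intro exI conjI) (auto simp: algebra_simps)
qed

theorem quasi_total_if_dominant:
  assumes dominant: "\<And>a b. a \<in> topspace X \<Longrightarrow> b \<in> topspace X \<Longrightarrow> \<exists>n. (b, (T ^^ n) a) \<in> R \<and> (T ^^ n) a \<noteq> b"
  shows "\<exists>N. \<forall>a\<in>topspace X. \<forall>b\<in>topspace X. \<exists>k\<le>N. (a, (T ^^ k) b) \<in> R \<or> (b, (T ^^ k) a) \<in> R"
proof -
  obtain p where p: "(c\<^sub>0, (T ^^ p) a\<^sub>0) \<in> R" using dominant[OF a\<^sub>0 c\<^sub>0] by blast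
  obtain q where q: "(a\<^sub>0, (T ^^ q) c\<^sub>0) \<in> R" using dominant[OF c\<^sub>0 a\<^sub>0] by blast
  obtain n where n: "(a\<^sub>0, (T ^^ n) a\<^sub>0) \<in> R" "(T ^^ n) a\<^sub>0 \<noteq> a\<^sub>0" using dominant[OF a\<^sub>0 a\<^sub>0] by blast
  have "n > 0" using n(2) by (cases n) auto
  have bounded: "\<exists>k\<le>p + q + n. (u, (T ^^ k) w) \<in> R"
    if uw: "w \<in> topspace X" "(u, Tpow X T s w) \<in> R" and s: "s \<le> int (p + q)" for u w s
  proof -
    obtain k where "k < nat s + n" "(u, (T ^^ k) w) \<in> R"
      using recurrence_reduce_exponent[of n] uniform_recurrence[OF n(1)] \<open>n > 0\<close> uw by blast
    moreover have "nat s \<le> p + q" using s by (simp add: nat_le_iff)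
    ultimately show ?thesis by (intro exI[of _ k]) auto
  qed
  have "\<exists>k\<le>p + q + n. (a, (T ^^ k) b) \<in> R \<or> (b, (T ^^ k) a) \<in> R"
    if ab: "a \<in> topspace X" "b \<in> topspace X" for a b
  proof -
    obtain s t where st: "s + t = 2 * int (p + q)" "(a, Tpow X T s b) \<in> R" "(b, Tpow X T t a) \<in> R"
      using two_sided_shift[OF p q ab] by blast
    then consider "s \<le> int (p + q)" | "t \<le> int (p + q)" by (cases "s \<le> int (p + q)") auto
    then show ?thesis using bounded[OF ab(2) st(2)] bounded[OF ab(1) st(3)] by cases blast+
  qed
  then show ?thesis by blast
qed

end

end

lemma almost_2_transitive_quotD:
  assumes "almost_2_transitive_quot X A Cf T"
  obtains a\<^sub>0 c\<^sub>0 where "a\<^sub>0 \<in> topspace X" "c\<^sub>0 \<in> topspace X"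
    "\<And>a b. a \<in> topspace X \<Longrightarrow> b \<in> topspace X \<Longrightarrow>
       \<exists>g\<in>centralizer X A Cf T. \<exists>h\<in>centralizer X A Cf T. orb X T a = orb X T (g a\<^sub>0) \<and>
         orb X T (g c\<^sub>0) = orb X T (h a\<^sub>0) \<and> orb X T (h c\<^sub>0) = orb X T b"
proof -
  obtain a\<^sub>0 c\<^sub>0 where a\<^sub>0: "a\<^sub>0 \<in> topspace X" and c\<^sub>0: "c\<^sub>0 \<in> topspace X" and chain:
    "\<forall>x\<in>quot_space X T. \<forall>y\<in>quot_space X T. \<exists>z\<in>quot_space X T.
       (x, z) \<in> {(orb X T (g a\<^sub>0), orb X T (g c\<^sub>0)) | g. g \<in> centralizer X A Cf T} \<and>
       (z, y) \<in> {(orb X T (g a\<^sub>0), orb X T (g c\<^sub>0)) | g. g \<in> centralizer X A Cf T}"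
    using assms unfolding almost_2_transitive_quot_def Let_def by blast
  show ?thesis
  proof (rule that[OF a\<^sub>0 c\<^sub>0])
    fix a b assume "a \<in> topspace X" "b \<in> topspace X"
    then have "orb X T a \<in> quot_space X T" "orb X T b \<in> quot_space X T" by (simp_all add: quot_space_def)
    then obtain z where
      "(orb X T a, z) \<in> {(orb X T (g a\<^sub>0), orb X T (g c\<^sub>0)) | g. g \<in> centralizer X A Cf T}"
      "(z, orb X T b) \<in> {(orb X T (g a\<^sub>0), orb X T (g c\<^sub>0)) | g. g \<in> centralizer X A Cf T}"
      using chain by meson
    then obtain g h where "g \<in> centralizer X A Cf T" "h \<in> centralizer X A Cf T"
      "orb X T a = orb X T (g a\<^sub>0)" "z = orb X T (g c\<^sub>0)" "z = orb X T (h a\<^sub>0)" "orb X T b = orb X T (h c\<^sub>0)"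
      by blast
    then show "\<exists>g\<in>centralizer X A Cf T. \<exists>h\<in>centralizer X A Cf T. orb X T a = orb X T (g a\<^sub>0) \<and>
        orb X T (g c\<^sub>0) = orb X T (h a\<^sub>0) \<and> orb X T (h c\<^sub>0) = orb X T b" by metis
  qed
qed

lemma causal_manifold_smooth_atlas: "causal_manifold X A Cf \<Longrightarrow> smooth_atlas X A"
  by (simp add: causal_manifold_def conal_manifold_def smooth_manifold_def)

lemma order_translation_cone_group:
  assumes "causal_manifold X A Cf" "T \<in> cone_group X A Cf"
  shows "order_translation X T (causal_rel X A Cf)"
proof -
  have "partial_order_on (topspace X) (causal_rel X A Cf)"
    using assms(1) by (simp add: causal_manifold_def)
  moreover have "bij_betw T (topspace X) (topspace X)"
    using assms(2) by (simp add: cone_group_iff diffeo_def)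
  ultimately show ?thesis
    using cone_group_causal_rel_image[OF causal_manifold_smooth_atlas[OF assms(1)] assms(2)]
    by unfold_locales (auto simp: partial_order_on_def preorder_on_def refl_on_def)
qed

lemma centralizerD:
  assumes "smooth_atlas X A" "g \<in> centralizer X A Cf T"
  shows "x \<in> topspace X \<Longrightarrow> g (T x) = T (g x)"
    and "x \<in> topspace X \<Longrightarrow> g x \<in> topspace X"
    and "(x, y) \<in> causal_rel X A Cf \<Longrightarrow> (g x, g y) \<in> causal_rel X A Cf"
  using assms(2) cone_group_causal_rel_image(1)[OF assms(1)]
  by (auto simp: centralizer_def cone_group_iff diffeo_def bij_betw_def)

theorem theorem5p8:
  fixes X :: "'p topology" and A :: "('p, 'e::euclidean_space) chart set"
    and Cf :: "('p, 'e) cone_field" and T :: "'p \<Rightarrow> 'p"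
  assumes "causal_manifold X A Cf"
    and "T \<in> cone_group X A Cf"
    and "infinite_cyclic_gen X T"
    and "properly_discontinuous_Z X T"
    and "causal_covering X A Cf T"
    and "dominant X A Cf T"
    and "almost_2_transitive_quot X A Cf T"
  shows "quasi_total X A Cf T"
proof -
  interpret order_translation X T "causal_rel X A Cf"
    using order_translation_cone_group[OF assms(1,2)] .
  note centralizerD[OF causal_manifold_smooth_atlas[OF assms(1)]]
  moreover obtain a\<^sub>0 c\<^sub>0 where "a\<^sub>0 \<in> topspace X" "c\<^sub>0 \<in> topspace X" and "\<And>a b. a \<in> topspace X \<Longrightarrow>
      b \<in> topspace X \<Longrightarrow> \<exists>g\<in>centralizer X A Cf T. \<exists>h\<in>centralizer X A Cf T.
        orb X T a = orb X T (g a\<^sub>0) \<and> orb X T (g c\<^sub>0) = orb X T (h a\<^sub>0) \<and> orb X T (h c\<^sub>0) = orb X T b"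
    using almost_2_transitive_quotD[OF assms(7)] by blast
  moreover have "\<And>a b. a \<in> topspace X \<Longrightarrow> b \<in> topspace X \<Longrightarrow>
      \<exists>n. (b, (T ^^ n) a) \<in> causal_rel X A Cf \<and> (T ^^ n) a \<noteq> b"
    using assms(6) unfolding dominant_def by blast
  ultimately have "\<exists>N. \<forall>a\<in>topspace X. \<forall>b\<in>topspace X. \<exists>k\<le>N.
      (a, (T ^^ k) b) \<in> causal_rel X A Cf \<or> (b, (T ^^ k) a) \<in> causal_rel X A Cf"
    by (rule quasi_total_if_dominant)
  then show ?thesis unfolding quasi_total_def .
qed

end
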